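(* Call a butterfly partition of $n$ a partition of $n$ into distinct parts $p_1>p_2>\dots>p_k$ with $k\ge 3$, $p_1=p_2+1=p_3+2$ and $p_k\ge 2$. For $n\ge 6$ let $s_e(n)$ (resp. $s_o(n)$) be the number of butterfly partitions of $n$ whose second largest part $p_2$ is even (resp. odd), and let $s(n)=q(n)-2q(n-1)+q(n-2)$, where $q(m)$ is the number of partitions of $m$ into distinct parts ($q(0)=1$, $q(m)=0$ for $m<0$). For a positive integer $N$, write $\pi(N)$ for the largest power of $2$ that is $\le N$. (a) For $n\ge 6$ let $o_e(n)$ be the number of partitions $q_1\ge q_2\ge\dots\ge q_r$ of $n$ with all parts odd and $\ge 3$, $r\ge 4$, $q_2=q_3$, $q_r=3$, and $q_3>q_4$ unless $q_2=q_3=q_4=3$, which satisfy the following conditions, where $t=(q_1-q_2)/2$, for each odd integer $q\neq 3$ $u(q)$ is the number of indices $j\in\{4,\dots,r\}$ with $q_j=q$, and $v$ is the number of indices $j\in\{4,\dots,r-1\}$ with $q_j=3$: (i) if $t>0$ then $2\,\pi(t)\le q_3-1$; (ii) for every odd $q\ne 3$ with $u(q)>0$, $q\,\pi(u(q))\le q_3-1$; (iii) if $v>0$ then $3\,\pi(v)\le q_3-1$. Then $o_e(n)=s_e(n)$ for all $n\ge 6$. (b) For $n\ge 6$ let $o_o(n)$ be the number of partitions of $n$ which are either the partition $3=3=3$ (when $n=9$), or of the form $q_1>q_2>q_3=q_2-2\ge q_4\ge\dots\ge q_r\ge 3$ with all parts odd, $r\ge 3$ and $q_1-q_2\ge 2$,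 satisfying the following conditions, where $t=(q_1-q_2-2)/2$, for each odd integer $q\ne 3$ $u(q)$ is the number of indices $j\in\{4,\dots,r\}$ with $q_j=q$, and $v$ is the number of indices $j\in\{4,\dots,r\}$ with $q_j=3$: (i) if $t>0$ then $2\,\pi(t)\le q_3$; (ii) for every odd $q\neq 3$ with $u(q)>0$, $q\,\pi(u(q))\le q_3$; (iii) if $v>0$ then $3\,\pi(v)\le q_3$. Then $o_o(n)=s_o(n)$ for all $n\ge 6$. (c) For all $n\ge 6$, $o_e(n)+o_o(n)=s(n)$.
   Context: $q(m)$ counts partitions of $m$ into distinct parts. In conditions (i)–(iii) a condition is vacuous when the corresponding quantity $t$, $u(q)$ or $v$ is zero. *)

theory Defs
  imports Main
begin

text \<open>Partitions are represented as lists of parts listed in weakly (or strictly)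
  decreasing order; list index j (0-based) corresponds to the part q_{j+1}.\<close>

definition qd :: "nat \<Rightarrow> nat" where
  "qd m = card {xs :: nat list. sorted_wrt (>) xs \<and> 0 \<notin> set xs \<and> sum_list xs = m}"

definition s :: "nat \<Rightarrow> int" where
  "s n = int (qd n) - 2 * int (qd (n - 1)) + int (qd (n - 2))"

definition butterfly :: "nat \<Rightarrow> nat list \<Rightarrow> bool" where
  "butterfly n p \<longleftrightarrow> sorted_wrt (>) p \<and> length p \<ge> 3 \<and> sum_list p = n \<and>
     p!0 = p!1 + 1 \<and> p!1 = p!2 + 1 \<and> last p \<ge> 2"

definition s_e :: "nat \<Rightarrow> nat" where
  "s_e n = card {p. butterfly n p \<and> even (p!1)}"

definition s_o :: "nat \<Rightarrow> nat" where
  "s_o n = card {p. butterfly n p \<and> odd (p!1)}"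

definition pi2 :: "nat \<Rightarrow> nat" where
  "pi2 N = (GREATEST p. (\<exists>k. p = 2 ^ k) \<and> p \<le> N)"

definition mult_in :: "nat list \<Rightarrow> nat \<Rightarrow> nat \<Rightarrow> nat \<Rightarrow> nat" where
  "mult_in qs a b x = card {j. a \<le> j \<and> j \<le> b \<and> qs!(j - 1) = x}"

definition oe_part :: "nat \<Rightarrow> nat list \<Rightarrow> bool" where
  "oe_part n qs \<longleftrightarrow>
     (let r = length qs; q1 = qs!0; q2 = qs!1; q3 = qs!2; q4 = qs!3;
          t = (q1 - q2) div 2;
          u = (\<lambda>x. mult_in qs 4 r x);
          v = mult_in qs 4 (r - 1) 3
      in sorted_wrt (\<ge>) qs \<and> sum_list qs = n \<and>
         (\<forall>x\<in>set qs. odd x \<and> x \<ge> 3) \<and> r \<ge> 4 \<and> q2 = q3 \<and> last qs = 3 \<and>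
         (q3 > q4 \<or> (q2 = 3 \<and> q3 = 3 \<and> q4 = 3)) \<and>
         (t > 0 \<longrightarrow> 2 * pi2 t \<le> q3 - 1) \<and>
         (\<forall>x. odd x \<and> x \<noteq> 3 \<and> u x > 0 \<longrightarrow> x * pi2 (u x) \<le> q3 - 1) \<and>
         (v > 0 \<longrightarrow> 3 * pi2 v \<le> q3 - 1))"

definition o_e :: "nat \<Rightarrow> nat" where
  "o_e n = card {qs. oe_part n qs}"

definition oo_part :: "nat \<Rightarrow> nat list \<Rightarrow> bool" where
  "oo_part n qs \<longleftrightarrow>
     (qs = [3, 3, 3] \<and> n = 9) \<or>
     (let r = length qs; q1 = qs!0; q2 = qs!1; q3 = qs!2;
          t = (q1 - q2 - 2) div 2;
          u = (\<lambda>x. mult_in qs 4 r x);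
          v = mult_in qs 4 r 3
      in r \<ge> 3 \<and> sum_list qs = n \<and> (\<forall>x\<in>set qs. odd x \<and> x \<ge> 3) \<and>
         q1 > q2 \<and> q2 \<ge> 2 \<and> q3 = q2 - 2 \<and> sorted_wrt (\<ge>) (drop 2 qs) \<and>
         q1 - q2 \<ge> 2 \<and>
         (t > 0 \<longrightarrow> 2 * pi2 t \<le> q3) \<and>
         (\<forall>x. odd x \<and> x \<noteq> 3 \<and> u x > 0 \<longrightarrow> x * pi2 (u x) \<le> q3) \<and>
         (v > 0 \<longrightarrow> 3 * pi2 v \<le> q3))"

definition o_o :: "nat \<Rightarrow> nat" where
  "o_o n = card {qs. oo_part n qs}"

end

theory Submission
  imports Defs "HOL-Library.Multiset" "HOL-Library.Discrete_Functions"
begin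

(* Part (c) is a counting argument on partitions into distinct parts. Let d(m) count those
   with all parts >= 2, and w(m) those among them whose two largest parts are consecutive.
   Removing a part 1 gives q(m) = d(m) + d(m-1); lowering the largest part of the partitions
   not counted by w gives d(m) = w(m) + d(m-1); lowering the two largest parts of those
   counted by w that are not butterflies gives w(n) = b(n) + w(n-2), where b(n) counts the
   butterfly partitions. Hence b(n) = d(n) - d(n-1) - d(n-2) + d(n-3) = s(n).

   For (a) and (b), a butterfly partition with p_2 = a is (a+1, a, a-1) followed by the
   elements of a set D in [2, a-2]. Glaisher's map sends each x 2^i in D (x odd) to 2^i
   copies of x, so x gets multiplicity sum {2^i | x 2^i in D}: D is recovered from the binary
   digits of the multiplicities, and D lies in [2, a-2] exactly when 1 has even multiplicity
   and x pi(mult x) <= a - 2 for every x, pi(mult x) being the largest 2^i with x 2^i in D.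
   Absorbing the 1s into the largest part and listing the remaining parts decreasingly
   gives the partitions counted by o_e for even a (q_2 = q_3 = a - 1 and a final part 3)
   and by o_o for odd a (q_2 = a, q_3 = a - 2); the bound for x = 1, x <> 3 and x = 3 is
   condition (i), (ii) and (iii). *)

section \<open>Decreasing lists and multisets\<close>

lemma last_le_of_sorted_greater:
  assumes "sorted_wrt (>) xs" "x \<in> set xs"
  shows "last xs \<le> (x :: 'a::linorder)"
  using assms by (induction xs) (auto simp: less_imp_le)

lemma sorted_greater_iff: "sorted_wrt (>) xs \<longleftrightarrow> sorted (rev xs) \<and> distinct (xs :: 'a::linorder list)"
proof -
  have "sorted_wrt (>) xs \<longleftrightarrow> sorted_wrt (<) (rev xs)"
    by (simp add: sorted_wrt_rev)
  also have "\<dots> \<longleftrightarrow> sorted (rev xs) \<and> distinct (rev xs)"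
    by (rule strict_sorted_iff)
  finally show ?thesis
    by simp
qed

lemma rev_sorted_list_of_set_set:
  assumes "sorted_wrt (>) xs"
  shows "rev (sorted_list_of_set (set xs)) = (xs :: 'a::linorder list)"
  using assms sorted_list_of_set.idem_if_sorted_distinct[of "rev xs"]
  by (simp add: sorted_greater_iff)

lemma Cons3_snoc_cases:
  assumes "4 \<le> length xs"
  obtains a b c R where "xs = a # b # c # R @ [last xs]"
proof -
  obtain a b c rest where xs: "xs = a # b # c # rest" and "rest \<noteq> []"
    using assms by (auto simp: Suc_le_length_iff numeral_eq_Suc)
  then have "xs = a # b # c # butlast rest @ [last xs]"
    by simp
  then show ?thesis
    by (rule that)
qed

definition desc_list :: "'a::linorder multiset \<Rightarrow> 'a list" where
  "desc_list M = rev (sorted_list_of_multiset M)"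

lemma mset_desc_list [simp]: "mset (desc_list M) = M"
  by (simp add: desc_list_def)

lemma sorted_desc_list: "sorted_wrt (\<ge>) (desc_list M)"
  by (simp add: desc_list_def sorted_wrt_rev)

lemma desc_list_mset:
  assumes "sorted_wrt (\<ge>) xs"
  shows "desc_list (mset xs) = xs"
proof -
  have "sorted (rev xs)"
    using assms by (simp add: sorted_wrt_rev)
  then have "sort xs = rev xs"
    by (intro properties_for_sort) simp_all
  then show ?thesis
    by (simp add: desc_list_def)
qed

lemma filter_mset_neq_add_replicate: "{#y \<in># M. y \<noteq> x#} + replicate_mset (count M x) x = M"
  by (rule multiset_eqI) simp

section \<open>Binary expansions and the largest power of two below a number\<close>

lemma pow2_le_of_bit: "bit (c::nat) i \<Longrightarrow> 2 ^ i \<le> c"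
  by (cases "c < 2 ^ i") (auto simp: bit_iff_odd)

lemma finite_bit_nat: "finite {i. bit (c::nat) i}"
proof (rule finite_subset)
  show "{i. bit c i} \<subseteq> {..<c}"
    using pow2_le_of_bit less_exp by (fastforce intro: less_le_trans)
qed simp

lemma sum_pow2_less:
  assumes "finite S" "\<forall>i\<in>S. i < b"
  shows "(\<Sum>i\<in>S. (2::nat) ^ i) < 2 ^ b"
proof -
  have "(\<Sum>i\<in>S. (2::nat) ^ i) \<le> (\<Sum>i<b. 2 ^ i)"
    using assms by (intro sum_mono2) auto
  also have "\<dots> < 2 ^ b"
    by (induction b) auto
  finally show ?thesis .
qed

lemma bit_sum_pow2_iff:
  assumes "finite S"
  shows "bit (\<Sum>i\<in>S. (2::nat) ^ i) j \<longleftrightarrow> j \<in> S"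
  using assms
proof (induction S rule: finite_linorder_max_induct)
  case (insert b S)
  have "(\<Sum>i\<in>S. (2::nat) ^ i) < 2 ^ b"
    using insert by (intro sum_pow2_less) auto
  then have "\<not> bit (\<Sum>i\<in>S. (2::nat) ^ i) b"
    using pow2_le_of_bit by fastforce
  then have "\<not> bit ((2::nat) ^ b) k \<or> \<not> bit (\<Sum>i\<in>S. (2::nat) ^ i) k" for k
    by (auto simp: bit_exp_iff)
  then show ?case
    using insert by (auto simp: bit_disjunctive_add_iff bit_exp_iff)
qed simp

lemma sum_pow2_bits: "(\<Sum>i | bit c i. (2::nat) ^ i) = c"
  by (rule bit_eqI) (simp add: bit_sum_pow2_iff finite_bit_nat)

lemma pi2_eq_floor_log:
  assumes "0 < N"
  shows "pi2 N = 2 ^ floor_log N"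
  unfolding pi2_def
proof (rule Greatest_equality)
  show "(\<exists>k. (2::nat) ^ floor_log N = 2 ^ k) \<and> 2 ^ floor_log N \<le> N"
    using floor_log_exp2_le[OF assms] by blast
next
  fix p assume "(\<exists>k. p = 2 ^ k) \<and> p \<le> N"
  then obtain k where "p = 2 ^ k" "2 ^ k \<le> N" by blast
  then show "p \<le> 2 ^ floor_log N"
    using floor_log_le_iff[of "2 ^ k" N] by simp
qed

lemma pow2_le_pi2:
  assumes "(2::nat) ^ i \<le> N"
  shows "2 ^ i \<le> pi2 N"
proof -
  have "0 < N"
    using assms less_le_trans[of 0 "2 ^ i" N] by simp
  then show ?thesis
    using floor_log_le_iff[OF assms] by (simp add: pi2_eq_floor_log)
qed

lemma pi2_double: "0 < t \<Longrightarrow> pi2 (2 * t) = 2 * pi2 t"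
  by (simp add: pi2_eq_floor_log)

lemma pi2_sum_pow2:
  assumes "finite S" "S \<noteq> {}"
  shows "pi2 (\<Sum>i\<in>S. (2::nat) ^ i) = 2 ^ Max S"
proof -
  have "2 ^ Max S \<le> (\<Sum>i\<in>S. (2::nat) ^ i)"
    using assms by (intro member_le_sum) auto
  moreover have "(\<Sum>i\<in>S. (2::nat) ^ i) < 2 * 2 ^ Max S"
    using sum_pow2_less[of S "Suc (Max S)"] assms by (simp add: le_imp_less_Suc)
  ultimately show ?thesis
    by (simp add: pi2_eq_floor_log floor_log_eqI)
qed

section \<open>Glaisher's bijection\<close>

lemma odd_pow2_decomposition:
  fixes y :: nat
  assumes "0 < y"
  shows "\<exists>x i. odd x \<and> y = x * 2 ^ i"
  using assms
proof (induction y rule: less_induct)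
  case (less y)
  show ?case
  proof (cases "odd y")
    case True
    then show ?thesis by (intro exI[of _ y] exI[of _ 0]) simp
  next
    case False
    then obtain z where y: "y = 2 * z" by blast
    with less.prems have "z < y" "0 < z" by auto
    then obtain x i where "odd x" "z = x * 2 ^ i" using less.IH by blast
    then show ?thesis using y by (intro exI[of _ x] exI[of _ "Suc i"]) simp
  qed
qed

lemma odd_pow2_inject:
  fixes x y :: nat
  assumes "odd x" "odd y" "x * 2 ^ i = y * 2 ^ j"
  shows "x = y \<and> i = j"
proof -
  have *: "x = y \<and> i = j" if "odd x" "x * 2 ^ i = y * 2 ^ j" "i \<le> j" for x y :: nat and i j
  proof -
    have "x * 2 ^ i = (y * 2 ^ (j - i)) * 2 ^ i"
      using that by (simp add: power_add[symmetric])
    then have "x = y * 2 ^ (j - i)" by simp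
    with that(1) have "j - i = 0" by (cases "j - i") auto
    then show ?thesis using that \<open>x = y * 2 ^ (j - i)\<close> by simp
  qed
  show ?thesis
    using *[of x i y j] *[of y j x i] assms by (cases "i \<le> j") auto
qed

definition glaisher :: "nat set \<Rightarrow> nat multiset" where
  "glaisher D = (\<Sum>(x, i)\<in>{(x, i). odd x \<and> x * 2 ^ i \<in> D}. replicate_mset (2 ^ i) x)"

definition glaisher_inv :: "nat multiset \<Rightarrow> nat set" where
  "glaisher_inv M = {x * 2 ^ i | x i. odd x \<and> bit (count M x) i}"

definition glaisher_admissible :: "nat \<Rightarrow> nat multiset \<Rightarrow> bool" where
  "glaisher_admissible B M \<longleftrightarrow>
     (\<forall>x\<in>#M. odd x) \<and> even (count M 1) \<and> (\<forall>x\<in>#M. x * pi2 (count M x) \<le> B)"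

lemma bij_betw_odd_pow2:
  fixes D :: "nat set"
  assumes "0 \<notin> D"
  shows "bij_betw (\<lambda>(x, i). x * 2 ^ i) {(x, i). odd x \<and> x * 2 ^ i \<in> D} D"
proof (rule bij_betwI')
  show "\<exists>p\<in>{(x, i). odd x \<and> x * 2 ^ i \<in> D}. y = (\<lambda>(x, i). x * 2 ^ i) p" if "y \<in> D" for y :: nat
    using that assms odd_pow2_decomposition[of y] by (cases "y = 0") auto
qed (auto dest: odd_pow2_inject)

lemma count_glaisher:
  assumes "finite D" "0 \<notin> D"
  shows "count (glaisher D) y = (\<Sum>i | odd y \<and> y * 2 ^ i \<in> D. 2 ^ i)"
proof -
  let ?S = "{(x, i). odd x \<and> x * 2 ^ i \<in> D}"
  have "finite ?S"
    using bij_betw_finite[OF bij_betw_odd_pow2[OF assms(2)]] assms(1) by simp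
  have "count (glaisher D) y = (\<Sum>(x, i)\<in>?S. if x = y then 2 ^ i else 0)"
    unfolding glaisher_def count_sum by (intro sum.cong) auto
  also have "\<dots> = (\<Sum>p\<in>{p \<in> ?S. fst p = y}. 2 ^ snd p)"
    using \<open>finite ?S\<close> by (subst sum.inter_filter) (simp_all add: case_prod_unfold)
  also have "{p \<in> ?S. fst p = y} = Pair y ` {i. odd y \<and> y * 2 ^ i \<in> D}"
    by auto
  also have "(\<Sum>p\<in>Pair y ` {i. odd y \<and> y * 2 ^ i \<in> D}. (2::nat) ^ snd p) =
      (\<Sum>i | odd y \<and> y * 2 ^ i \<in> D. 2 ^ i)"
    by (simp add: sum.reindex inj_on_def)
  finally show ?thesis .
qed

lemma sum_mset_glaisher:
  assumes "finite D" "0 \<notin> D"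
  shows "sum_mset (glaisher D) = \<Sum>D"
proof -
  have "sum_mset (glaisher D) = (\<Sum>(x, i)\<in>{(x, i). odd x \<and> x * 2 ^ i \<in> D}. x * 2 ^ i)"
    unfolding glaisher_def
    by (subst sum_comp_morphism[where h = sum_mset, symmetric]) (auto simp: case_prod_unfold mult.commute)
  also have "\<dots> = \<Sum>D"
    using sum.reindex_bij_betw[OF bij_betw_odd_pow2[OF assms(2)], of "\<lambda>y. y"] by simp
  finally show ?thesis .
qed

lemma finite_odd_pow2_exponents:
  assumes "finite (D :: nat set)" "odd x"
  shows "finite {i. x * 2 ^ i \<in> D}"
proof -
  have "inj (\<lambda>i. x * 2 ^ i)"
    using assms(2) by (auto simp: inj_def)
  then show ?thesis
    using finite_vimageI[OF assms(1)] by (simp add: vimage_def)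
qed

lemma bit_count_glaisher_iff:
  assumes "finite D" "0 \<notin> D" "odd x"
  shows "bit (count (glaisher D) x) i \<longleftrightarrow> x * 2 ^ i \<in> D"
  using assms by (simp add: count_glaisher bit_sum_pow2_iff finite_odd_pow2_exponents)

lemma glaisher_inv_glaisher:
  assumes "finite D" "0 \<notin> D"
  shows "glaisher_inv (glaisher D) = D"
proof (intro equalityI subsetI)
  fix y assume "y \<in> glaisher_inv (glaisher D)"
  then show "y \<in> D"
    unfolding glaisher_inv_def using bit_count_glaisher_iff[OF assms] by auto
next
  fix y assume "y \<in> D"
  moreover obtain x i where "odd x" "y = x * 2 ^ i"
    using odd_pow2_decomposition[of y] \<open>y \<in> D\<close> assms(2) by (cases "y = 0") auto
  ultimately show "y \<in> glaisher_inv (glaisher D)"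
    unfolding glaisher_inv_def using bit_count_glaisher_iff[OF assms] by auto
qed

lemma glaisher_admissible_glaisher:
  assumes "D \<subseteq> {2..B}"
  shows "glaisher_admissible B (glaisher D)"
proof -
  have D: "finite D" "0 \<notin> D"
    using assms finite_subset by auto
  have odd: "odd x" if "x \<in># glaisher D" for x
    using that by (cases "odd x") (auto simp: count_glaisher[OF D] simp flip: count_greater_zero_iff)
  have "even (\<Sum>i | odd (1::nat) \<and> 1 * 2 ^ i \<in> D. (2::nat) ^ i)"
  proof (rule dvd_sum)
    fix i assume "i \<in> {i. odd (1::nat) \<and> 1 * 2 ^ i \<in> D}"
    then have "i \<noteq> 0" using assms by (cases i) auto
    then show "even ((2::nat) ^ i)" by simp
  qed
  then have ones: "even (count (glaisher D) 1)"
    by (simp add: count_glaisher[OF D])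
  have bound: "x * pi2 (count (glaisher D) x) \<le> B" if "x \<in># glaisher D" for x
  proof -
    let ?S = "{i. x * 2 ^ i \<in> D}"
    have count: "count (glaisher D) x = (\<Sum>i\<in>?S. 2 ^ i)"
      using odd[OF that] by (simp add: count_glaisher[OF D])
    have "finite ?S"
      using D(1) odd[OF that] by (rule finite_odd_pow2_exponents)
    moreover have "?S \<noteq> {}"
      using that count by (metis count_greater_zero_iff less_irrefl sum.empty)
    ultimately have "Max ?S \<in> ?S" "pi2 (count (glaisher D) x) = 2 ^ Max ?S"
      unfolding count by (rule Max_in, rule pi2_sum_pow2)
    then show ?thesis
      using assms by auto
  qed
  show ?thesis
    unfolding glaisher_admissible_def using odd ones bound by blast
qed

lemma glaisher_inv_subset:
  assumes "glaisher_admissible B M"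
  shows "glaisher_inv M \<subseteq> {2..B}"
proof
  fix y assume "y \<in> glaisher_inv M"
  then obtain x i where y: "y = x * 2 ^ i" "odd x" "bit (count M x) i"
    unfolding glaisher_inv_def by auto
  have "2 ^ i \<le> count M x"
    using y(3) by (rule pow2_le_of_bit)
  then have "x \<in># M" "2 ^ i \<le> pi2 (count M x)"
    using pow2_le_pi2 less_le_trans[OF zero_less_power[of 2 i]] by (auto simp flip: count_greater_zero_iff)
  then have "y \<le> B"
    using assms y(1) unfolding glaisher_admissible_def by (metis mult_le_mono2 order_trans)
  moreover have "2 \<le> y"
  proof (cases "x = 1")
    case True
    then have "i \<noteq> 0"
      using assms y(3) True by (cases i) (auto simp: glaisher_admissible_def bit_0)
    then have "2 ^ 1 \<le> (2::nat) ^ i"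
      by (intro power_increasing) auto
    then show ?thesis
      using y(1) True by simp
  next
    case False
    with y(2) have "3 \<le> x" by presburger
    moreover have "x \<le> x * 2 ^ i"
      using mult_le_mono2[of 1 "2 ^ i" x] by simp
    ultimately show ?thesis
      using y(1) by linarith
  qed
  ultimately show "y \<in> {2..B}" by simp
qed

lemma glaisher_glaisher_inv:
  assumes "glaisher_admissible B M"
  shows "glaisher (glaisher_inv M) = M"
proof (rule multiset_eqI)
  fix x
  have D: "finite (glaisher_inv M)" "0 \<notin> glaisher_inv M"
    using glaisher_inv_subset[OF assms] finite_subset by auto
  show "count (glaisher (glaisher_inv M)) x = count M x"
  proof (cases "odd x")
    case True
    have "{i. odd x \<and> x * 2 ^ i \<in> glaisher_inv M} = {i. bit (count M x) i}"
      using True by (auto simp: glaisher_inv_def dest: odd_pow2_inject)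
    then show ?thesis
      by (simp add: count_glaisher[OF D] sum_pow2_bits)
  next
    case False
    then show ?thesis
      using assms by (auto simp: count_glaisher[OF D] glaisher_admissible_def not_in_iff)
  qed
qed

lemma glaisher_admissible_le:
  assumes "glaisher_admissible B M" "x \<in># M"
  shows "x \<le> B"
proof -
  have "1 \<le> pi2 (count M x)"
    using pow2_le_pi2[of 0 "count M x"] assms(2) by (simp add: Suc_le_eq)
  then have "x \<le> x * pi2 (count M x)"
    by simp
  also have "\<dots> \<le> B"
    using assms unfolding glaisher_admissible_def by blast
  finally show ?thesis .
qed

lemma glaisher_admissible_1:
  assumes "glaisher_admissible 1 M"
  shows "M = {#}"
proof (rule ccontr)
  assume "M \<noteq> {#}"
  then obtain x where x: "x \<in># M"
    by blast
  have "odd x" "x \<le> 1"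
    using assms glaisher_admissible_le[OF assms x] x unfolding glaisher_admissible_def by auto
  then have "x = 1"
    by (cases x) auto
  have "even (count M 1)" "0 < count M 1"
    using assms x \<open>x = 1\<close> unfolding glaisher_admissible_def by auto
  then have "2 \<le> count M 1"
    by presburger
  then have "2 \<le> pi2 (count M 1)"
    using pow2_le_pi2[of 1] by simp
  moreover have "1 * pi2 (count M 1) \<le> 1"
    using assms x \<open>x = 1\<close> unfolding glaisher_admissible_def by blast
  ultimately show False
    by simp
qed

lemma glaisher_admissible_add_ones_iff:
  fixes L :: "nat list"
  assumes "1 \<notin> set L"
  shows "glaisher_admissible B (mset L + replicate_mset c 1) \<longleftrightarrow>
    even c \<and> (0 < c div 2 \<longrightarrow> 2 * pi2 (c div 2) \<le> B) \<and>
    (\<forall>x\<in>set L. odd x \<and> x * pi2 (count (mset L) x) \<le> B)"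
proof -
  let ?M = "mset L + replicate_mset c 1"
  have count_ones: "count ?M 1 = c"
    using assms by (simp add: count_mset_0_iff)
  have mem: "(\<forall>x\<in>#?M. P x) \<longleftrightarrow> (\<forall>x\<in>set L. P x) \<and> (0 < c \<longrightarrow> P 1)" for P
    by auto
  have count_L: "(\<forall>x\<in>set L. x * pi2 (count ?M x) \<le> B) \<longleftrightarrow>
      (\<forall>x\<in>set L. x * pi2 (count (mset L) x) \<le> B)"
    using assms by (intro ball_cong) auto
  have ones: "(0 < c \<longrightarrow> pi2 c \<le> B) \<longleftrightarrow> (0 < c div 2 \<longrightarrow> 2 * pi2 (c div 2) \<le> B)"
    if "even c"
    using that pi2_double[of "c div 2"] by (auto elim!: evenE)
  have "glaisher_admissible B ?M \<longleftrightarrow> even c \<and> (0 < c \<longrightarrow> pi2 c \<le> B) \<and>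
      (\<forall>x\<in>set L. odd x \<and> x * pi2 (count (mset L) x) \<le> B)"
    unfolding glaisher_admissible_def mem count_ones count_L by auto
  then show ?thesis
    using ones by (cases "even c") simp_all
qed

lemma glaisher_admissible_non_ones_ge3:
  assumes "glaisher_admissible B M"
  shows "\<forall>x\<in>set (desc_list {#x \<in># M. x \<noteq> 1#}). 3 \<le> x"
proof
  fix x assume "x \<in> set (desc_list {#x \<in># M. x \<noteq> 1#})"
  then have "x \<in># M" "x \<noteq> 1"
    unfolding set_mset_mset[symmetric] mset_desc_list by simp_all
  then have "odd x" "x \<noteq> 1"
    using assms unfolding glaisher_admissible_def by blast+
  then show "3 \<le> x"
    by presburger
qed

section \<open>Butterfly partitions\<close>

lemma butterfly_iff:
  "butterfly n p \<longleftrightarrow> (\<exists>a R. p = (a + 1) # a # (a - 1) # R \<and> 3 \<le> a \<and> sorted_wrt (>) R \<and>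
     set R \<subseteq> {2..a - 2} \<and> 3 * a + sum_list R = n)"
proof
  assume b: "butterfly n p"
  then obtain x y z R where p: "p = x # y # z # R"
    unfolding butterfly_def by (auto simp: Suc_le_length_iff numeral_eq_Suc)
  have "\<forall>w\<in>set p. 2 \<le> w"
    using b last_le_of_sorted_greater[of p] unfolding butterfly_def by (meson order_trans)
  then show "\<exists>a R. p = (a + 1) # a # (a - 1) # R \<and> 3 \<le> a \<and> sorted_wrt (>) R \<and>
     set R \<subseteq> {2..a - 2} \<and> 3 * a + sum_list R = n"
    using b unfolding p butterfly_def by (intro exI[of _ y] exI[of _ R]) fastforce
next
  assume "\<exists>a R. p = (a + 1) # a # (a - 1) # R \<and> 3 \<le> a \<and> sorted_wrt (>) R \<and>
     set R \<subseteq> {2..a - 2} \<and> 3 * a + sum_list R = n"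
  then obtain a R where p: "p = (a + 1) # a # (a - 1) # R" and a: "3 \<le> a"
    and R: "sorted_wrt (>) R" "set R \<subseteq> {2..a - 2}" "3 * a + sum_list R = n"
    by blast
  have "2 \<le> last p"
  proof (cases "R = []")
    case False
    then have "last R \<in> {2..a - 2}"
      using R(2) last_in_set by blast
    then show ?thesis
      using False unfolding p by simp
  qed (use a in \<open>simp add: p\<close>)
  moreover have "sorted_wrt (>) p"
    using a R(1,2) unfolding p by fastforce
  ultimately show "butterfly n p"
    using a R(3) unfolding butterfly_def p by simp
qed

definition butterfly_param :: "(nat \<Rightarrow> bool) \<Rightarrow> nat \<Rightarrow> (nat \<times> nat set) set" where
  "butterfly_param P n = {(a, D). 3 \<le> a \<and> P a \<and> D \<subseteq> {2..a - 2} \<and> 3 * a + \<Sum>D = n}"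

definition butterfly_list :: "nat \<Rightarrow> nat set \<Rightarrow> nat list" where
  "butterfly_list a D = (a + 1) # a # (a - 1) # rev (sorted_list_of_set D)"

lemma butterfly_eq_image:
  "{p. butterfly n p \<and> P (p ! 1)} = (\<lambda>(a, D). butterfly_list a D) ` butterfly_param P n"
proof (intro equalityI subsetI)
  fix p assume "p \<in> {p. butterfly n p \<and> P (p ! 1)}"
  then obtain a R where p: "p = (a + 1) # a # (a - 1) # R" "3 \<le> a" "P a" "sorted_wrt (>) R"
    "set R \<subseteq> {2..a - 2}" "3 * a + sum_list R = n"
    by (auto simp: butterfly_iff)
  then have "sum_list R = \<Sum>(set R)"
    using sum_list_distinct_conv_sum_set[of R "\<lambda>x. x"] by (simp add: sorted_greater_iff)
  then have "(a, set R) \<in> butterfly_param P n"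
    using p by (simp add: butterfly_param_def)
  moreover have "p = butterfly_list a (set R)"
    using p by (simp add: butterfly_list_def rev_sorted_list_of_set_set)
  ultimately show "p \<in> (\<lambda>(a, D). butterfly_list a D) ` butterfly_param P n"
    by blast
next
  fix p assume "p \<in> (\<lambda>(a, D). butterfly_list a D) ` butterfly_param P n"
  then obtain a D where p: "p = butterfly_list a D" "3 \<le> a" "P a" "D \<subseteq> {2..a - 2}" "3 * a + \<Sum>D = n"
    by (auto simp: butterfly_param_def)
  let ?R = "rev (sorted_list_of_set D)"
  have "finite D"
    using p(4) finite_subset by blast
  then have "sorted_wrt (>) ?R" "set ?R = D"
    by (simp_all add: sorted_wrt_rev)
  moreover have "sum_list ?R = \<Sum>D"
    using sum_list_distinct_conv_sum_set[of ?R "\<lambda>x. x"] \<open>set ?R = D\<close> by simp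
  ultimately show "p \<in> {p. butterfly n p \<and> P (p ! 1)}"
    using p unfolding butterfly_iff butterfly_list_def by auto
qed

lemma inj_on_butterfly_list: "inj_on (\<lambda>(a, D). butterfly_list a D) {(a, D). finite D}"
proof (rule inj_onI, clarify)
  fix a D a' D'
  assume "finite D" "finite D'" "butterfly_list a D = butterfly_list a' D'"
  then show "a = a' \<and> D = D'"
    unfolding butterfly_list_def using sorted_list_of_set_inject by auto
qed

lemma card_butterfly_param: "card {p. butterfly n p \<and> P (p ! 1)} = card (butterfly_param P n)"
proof -
  have "inj_on (\<lambda>(a, D). butterfly_list a D) (butterfly_param P n)"
    by (rule inj_on_subset[OF inj_on_butterfly_list]) (auto simp: butterfly_param_def intro: finite_subset)
  then show ?thesis
    unfolding butterfly_eq_image by (rule card_image)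
qed

definition odd_param :: "(nat \<Rightarrow> bool) \<Rightarrow> nat \<Rightarrow> (nat \<times> nat multiset) set" where
  "odd_param P n = {(a, M). 3 \<le> a \<and> P a \<and> glaisher_admissible (a - 2) M \<and> 3 * a + sum_mset M = n}"

lemma card_butterfly_param_odd_param: "card (butterfly_param P n) = card (odd_param P n)"
proof -
  have glaisher_in: "(a, glaisher D) \<in> odd_param P n \<and> glaisher_inv (glaisher D) = D"
    if "(a, D) \<in> butterfly_param P n" for a D
  proof -
    have "D \<subseteq> {2..a - 2}" "finite D" "0 \<notin> D"
      using that by (auto simp: butterfly_param_def intro: finite_subset)
    then show ?thesis
      using that by (simp add: butterfly_param_def odd_param_def glaisher_admissible_glaisher
          sum_mset_glaisher glaisher_inv_glaisher)
  qed
  have glaisher_inv_in: "(a, glaisher_inv M) \<in> butterfly_param P n \<and> glaisher (glaisher_inv M) = M"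
    if "(a, M) \<in> odd_param P n" for a M
  proof -
    have adm: "glaisher_admissible (a - 2) M"
      using that by (simp add: odd_param_def)
    have sub: "glaisher_inv M \<subseteq> {2..a - 2}"
      using adm by (rule glaisher_inv_subset)
    then have "\<Sum>(glaisher_inv M) = sum_mset M"
      using sum_mset_glaisher[of "glaisher_inv M"] glaisher_glaisher_inv[OF adm] finite_subset by fastforce
    then show ?thesis
      using that sub glaisher_glaisher_inv[OF adm] by (simp add: butterfly_param_def odd_param_def)
  qed
  have "bij_betw (\<lambda>(a, D). (a, glaisher D)) (butterfly_param P n) (odd_param P n)"
    by (rule bij_betw_byWitness[where f' = "\<lambda>(a, M). (a, glaisher_inv M)"])
      (use glaisher_in glaisher_inv_in in force)+
  then show ?thesis
    by (rule bij_betw_same_card)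
qed

section \<open>The partitions counted by o_e and o_o\<close>

lemma mult_in_Cons3:
  assumes "k \<le> length L"
  shows "mult_in (a # b # c # L) 4 (3 + k) x = count (mset (take k L)) x"
proof -
  have "{j. 4 \<le> j \<and> j \<le> 3 + k \<and> (a # b # c # L) ! (j - 1) = x} =
      (\<lambda>i. i + 4) ` {i. i < k \<and> L ! i = x}"
  proof (intro equalityI subsetI)
    fix j assume "j \<in> {j. 4 \<le> j \<and> j \<le> 3 + k \<and> (a # b # c # L) ! (j - 1) = x}"
    then have j: "4 \<le> j" "j \<le> 3 + k" "(a # b # c # L) ! (j - 1) = x"
      by auto
    then have "j - 1 = Suc (Suc (Suc (j - 4)))"
      by arith
    then have "L ! (j - 4) = x"
      using j(3) by simp
    then show "j \<in> (\<lambda>i. i + 4) ` {i. i < k \<and> L ! i = x}"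
      using j(1,2) by (intro image_eqI[where x = "j - 4"]) auto
  next
    fix j assume "j \<in> (\<lambda>i. i + 4) ` {i. i < k \<and> L ! i = x}"
    then obtain i where "j = i + 4" "i < k" "L ! i = x"
      by auto
    then show "j \<in> {j. 4 \<le> j \<and> j \<le> 3 + k \<and> (a # b # c # L) ! (j - 1) = x}"
      by (simp add: eval_nat_numeral)
  qed
  then have "mult_in (a # b # c # L) 4 (3 + k) x = card {i. i < k \<and> L ! i = x}"
    unfolding mult_in_def by (simp add: card_image inj_on_def)
  also have "\<dots> = card {i. i < length (take k L) \<and> x = take k L ! i}"
    using assms by (intro arg_cong[where f = card]) auto
  also have "\<dots> = count (mset (take k L)) x"
    by (simp add: count_mset count_list_eq_length_filter length_filter_conv_card)
  finally show ?thesis .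
qed

(* Conditions (ii) and (iii) as one bound over the odd parts. For o_e they count in different
   tails: R' = R @ [3] includes the last part, R excludes it. *)
lemma multiplicity_bounds_iff:
  assumes "\<forall>x. x \<noteq> 3 \<longrightarrow> count (mset R') x = count (mset R) x"
  shows "(\<forall>x. odd x \<and> x \<noteq> 3 \<and> 0 < count (mset R') x \<longrightarrow> x * pi2 (count (mset R') x) \<le> B) \<and>
      (0 < count (mset R) 3 \<longrightarrow> 3 * pi2 (count (mset R) 3) \<le> B) \<longleftrightarrow>
    (\<forall>x\<in>set R. odd x \<longrightarrow> x * pi2 (count (mset R) x) \<le> B)"
proof -
  have pos: "0 < count (mset R) x \<longleftrightarrow> x \<in> set R" for x
    by (metis count_greater_zero_iff set_mset_mset)
  have "(odd x \<and> x \<noteq> 3 \<and> 0 < count (mset R') x \<longrightarrow> x * pi2 (count (mset R') x) \<le> B) \<longleftrightarrow>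
      (x \<in> set R \<and> odd x \<and> x \<noteq> 3 \<longrightarrow> x * pi2 (count (mset R) x) \<le> B)" for x
    using assms pos by (cases "x = 3") auto
  then show ?thesis
    using pos by auto
qed

lemma oe_part_Cons_iff:
  "oe_part n (q1 # q2 # q3 # R @ [3]) \<longleftrightarrow>
     sorted_wrt (\<ge>) (q1 # q2 # q3 # R @ [3]) \<and> sum_list (q1 # q2 # q3 # R @ [3]) = n \<and>
     (\<forall>x\<in>set (q1 # q2 # q3 # R @ [3]). odd x \<and> 3 \<le> x) \<and>
     q2 = q3 \<and> ((R @ [3]) ! 0 < q3 \<or> q2 = 3 \<and> q3 = 3 \<and> (R @ [3]) ! 0 = 3) \<and>
     (0 < (q1 - q2) div 2 \<longrightarrow> 2 * pi2 ((q1 - q2) div 2) \<le> q3 - 1) \<and>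
     (\<forall>x\<in>set R. odd x \<longrightarrow> x * pi2 (count (mset R) x) \<le> q3 - 1)"
proof -
  define qs where "qs = q1 # q2 # q3 # R @ [3]"
  have len: "length qs = 3 + length (R @ [3])" "length qs - 1 = 3 + length R"
    by (simp_all add: qs_def)
  have u: "mult_in qs 4 (length qs) x = count (mset (R @ [3])) x" for x
    using mult_in_Cons3[of "length (R @ [3])" "R @ [3]" q1 q2 q3 x, folded qs_def]
    unfolding len(1) by (simp only: take_all order_refl)
  have v: "mult_in qs 4 (length qs - 1) x = count (mset R) x" for x
    using mult_in_Cons3[of "length R" "R @ [3]" q1 q2 q3 x, folded qs_def]
    unfolding len(2) by (simp only: take_append take_all order_refl diff_self_eq_0 take_0 append_Nil2
      length_append_singleton le_SucI)
  have nth: "qs ! 0 = q1" "qs ! 1 = q2" "qs ! 2 = q3" "qs ! 3 = (R @ [3]) ! 0"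
    "4 \<le> length qs" "last qs = 3"
    by (simp_all add: qs_def)
  have bounds: "(\<forall>x. odd x \<and> x \<noteq> 3 \<and> 0 < count (mset (R @ [3])) x \<longrightarrow>
        x * pi2 (count (mset (R @ [3])) x) \<le> q3 - 1) \<and>
      (0 < count (mset R) 3 \<longrightarrow> 3 * pi2 (count (mset R) 3) \<le> q3 - 1) \<longleftrightarrow>
      (\<forall>x\<in>set R. odd x \<longrightarrow> x * pi2 (count (mset R) x) \<le> q3 - 1)"
    by (intro multiplicity_bounds_iff) simp
  show ?thesis
    unfolding qs_def[symmetric] oe_part_def Let_def u v nth(1-4,6) bounds[symmetric]
    using nth(5) by blast
qed

lemma oe_part_iff:
  "oe_part n (q1 # q2 # q3 # R @ [3]) \<longleftrightarrow>
     q3 = q2 \<and> odd q2 \<and> 3 \<le> q2 \<and> q2 \<le> q1 \<and> sorted_wrt (\<ge>) R \<and> (\<forall>x\<in>set R. 3 \<le> x) \<and>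
     glaisher_admissible (q2 - 1) (mset R + replicate_mset (q1 - q2) 1) \<and>
     q1 + 2 * q2 + sum_list R + 3 = n"
  (is "?lhs \<longleftrightarrow> ?rhs")
proof
  assume ?lhs
  then have part: "q2 \<le> q1" "q3 = q2" "odd q1" "odd q2" "3 \<le> q2" "sorted_wrt (\<ge>) R"
    "\<forall>x\<in>set R. odd x \<and> 3 \<le> x"
    "0 < (q1 - q2) div 2 \<longrightarrow> 2 * pi2 ((q1 - q2) div 2) \<le> q2 - 1"
    "\<forall>x\<in>set R. x * pi2 (count (mset R) x) \<le> q2 - 1"
    "q1 + 2 * q2 + sum_list R + 3 = n"
    unfolding oe_part_Cons_iff by (auto simp: sorted_wrt_append)
  have "even (q1 - q2)"
    using part(1,3,4) by presburger
  moreover have "1 \<notin> set R"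
    using part(7) by fastforce
  ultimately have "glaisher_admissible (q2 - 1) (mset R + replicate_mset (q1 - q2) 1)"
    using part(7-9) glaisher_admissible_add_ones_iff[of R "q2 - 1" "q1 - q2"] by simp
  then show ?rhs
    using part(1-7,10) by blast
next
  assume ?rhs
  then have part: "q3 = q2" "odd q2" "3 \<le> q2" "q2 \<le> q1" "sorted_wrt (\<ge>) R" "\<forall>x\<in>set R. 3 \<le> x"
    "glaisher_admissible (q2 - 1) (mset R + replicate_mset (q1 - q2) 1)"
    "q1 + 2 * q2 + sum_list R + 3 = n"
    by blast+
  have "1 \<notin> set R"
    using part(6) by auto
  have adm: "even (q1 - q2) \<and>
      (0 < (q1 - q2) div 2 \<longrightarrow> 2 * pi2 ((q1 - q2) div 2) \<le> q2 - 1) \<and>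
      (\<forall>x\<in>set R. odd x \<and> x * pi2 (count (mset R) x) \<le> q2 - 1)"
    using glaisher_admissible_add_ones_iff[OF \<open>1 \<notin> set R\<close>] part(7) by (rule iffD1)
  have "\<forall>x\<in>set R. x < q2"
    using part(2,3,7) glaisher_admissible_le[of "q2 - 1"] by fastforce
  moreover have "odd q1"
    using conjunct1[OF adm] part(2,4) by presburger
  ultimately show ?lhs
    unfolding oe_part_Cons_iff using part adm by (cases R) (auto simp: sorted_wrt_append)
qed

lemma oo_part_Cons_iff:
  "oo_part n (q1 # q2 # q3 # R) \<longleftrightarrow> (q1 # q2 # q3 # R = [3, 3, 3] \<and> n = 9) \<or>
     (sum_list (q1 # q2 # q3 # R) = n \<and> (\<forall>x\<in>set (q1 # q2 # q3 # R). odd x \<and> 3 \<le> x) \<and>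
      q2 < q1 \<and> 2 \<le> q2 \<and> q3 = q2 - 2 \<and> sorted_wrt (\<ge>) (q3 # R) \<and> 2 \<le> q1 - q2 \<and>
      (0 < (q1 - q2 - 2) div 2 \<longrightarrow> 2 * pi2 ((q1 - q2 - 2) div 2) \<le> q3) \<and>
      (\<forall>x\<in>set R. odd x \<longrightarrow> x * pi2 (count (mset R) x) \<le> q3))"
proof -
  define qs where "qs = q1 # q2 # q3 # R"
  have len: "length qs = 3 + length R"
    by (simp add: qs_def)
  have u: "mult_in qs 4 (length qs) x = count (mset R) x" for x
    using mult_in_Cons3[of "length R" R q1 q2 q3 x, folded qs_def]
    unfolding len by (simp only: take_all order_refl)
  have nth: "qs ! 0 = q1" "qs ! 1 = q2" "qs ! 2 = q3" "drop 2 qs = q3 # R" "3 \<le> length qs"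
    by (simp_all add: qs_def)
  have bounds: "(\<forall>x. odd x \<and> x \<noteq> 3 \<and> 0 < count (mset R) x \<longrightarrow> x * pi2 (count (mset R) x) \<le> q3) \<and>
      (0 < count (mset R) 3 \<longrightarrow> 3 * pi2 (count (mset R) 3) \<le> q3) \<longleftrightarrow>
      (\<forall>x\<in>set R. odd x \<longrightarrow> x * pi2 (count (mset R) x) \<le> q3)"
    by (intro multiplicity_bounds_iff) simp
  show ?thesis
    unfolding qs_def[symmetric] oo_part_def Let_def u nth(1-4) bounds[symmetric]
    using nth(5) by blast
qed

lemma oo_part_iff:
  "oo_part n (q1 # q2 # q3 # R) \<longleftrightarrow> (q1 # q2 # q3 # R = [3, 3, 3] \<and> n = 9) \<or>
     (q3 = q2 - 2 \<and> odd q2 \<and> 5 \<le> q2 \<and> q2 + 2 \<le> q1 \<and> sorted_wrt (\<ge>) R \<and> (\<forall>x\<in>set R. 3 \<le> x) \<and>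
      glaisher_admissible (q2 - 2) (mset R + replicate_mset (q1 - q2 - 2) 1) \<and>
      q1 + 2 * q2 + sum_list R = n + 2)"
  (is "_ \<longleftrightarrow> ?base \<or> ?rhs")
proof -
  have "oo_part n (q1 # q2 # q3 # R) \<and> \<not> ?base \<longleftrightarrow> ?rhs"
  proof
    assume "oo_part n (q1 # q2 # q3 # R) \<and> \<not> ?base"
    then have "sum_list (q1 # q2 # q3 # R) = n" "\<forall>x\<in>set (q1 # q2 # q3 # R). odd x \<and> 3 \<le> x"
      "q3 = q2 - 2" "sorted_wrt (\<ge>) (q3 # R)" "2 \<le> q1 - q2"
      "0 < (q1 - q2 - 2) div 2 \<longrightarrow> 2 * pi2 ((q1 - q2 - 2) div 2) \<le> q3"
      "\<forall>x\<in>set R. odd x \<longrightarrow> x * pi2 (count (mset R) x) \<le> q3"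
      unfolding oo_part_Cons_iff by blast+
    then have part: "q3 = q2 - 2" "odd q1" "odd q2" "5 \<le> q2" "q2 + 2 \<le> q1" "sorted_wrt (\<ge>) R"
      "\<forall>x\<in>set R. odd x \<and> 3 \<le> x"
      "0 < (q1 - q2 - 2) div 2 \<longrightarrow> 2 * pi2 ((q1 - q2 - 2) div 2) \<le> q2 - 2"
      "\<forall>x\<in>set R. x * pi2 (count (mset R) x) \<le> q2 - 2"
      "q1 + 2 * q2 + sum_list R = n + 2"
      by auto
    have "even (q1 - q2 - 2)"
      using part(2,3,5) by presburger
    moreover have "1 \<notin> set R"
      using part(7) by fastforce
    ultimately have "glaisher_admissible (q2 - 2) (mset R + replicate_mset (q1 - q2 - 2) 1)"
      using part(7-9) glaisher_admissible_add_ones_iff[of R "q2 - 2" "q1 - q2 - 2"] by simp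
    then show ?rhs
      using part(1,3-7,10) by blast
  next
    assume ?rhs
    then have part: "q3 = q2 - 2" "odd q2" "5 \<le> q2" "q2 + 2 \<le> q1" "sorted_wrt (\<ge>) R"
      "\<forall>x\<in>set R. 3 \<le> x" "glaisher_admissible (q2 - 2) (mset R + replicate_mset (q1 - q2 - 2) 1)"
      "q1 + 2 * q2 + sum_list R = n + 2"
      by blast+
    have "1 \<notin> set R"
      using part(6) by auto
    have adm: "even (q1 - q2 - 2) \<and>
        (0 < (q1 - q2 - 2) div 2 \<longrightarrow> 2 * pi2 ((q1 - q2 - 2) div 2) \<le> q2 - 2) \<and>
        (\<forall>x\<in>set R. odd x \<and> x * pi2 (count (mset R) x) \<le> q2 - 2)"
      using glaisher_admissible_add_ones_iff[OF \<open>1 \<notin> set R\<close>] part(7) by (rule iffD1)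
    have "\<forall>x\<in>set R. x \<le> q2 - 2"
      using part(7) glaisher_admissible_le[of "q2 - 2"] by fastforce
    moreover have "odd q1"
      using conjunct1[OF adm] part(2,4) by presburger
    moreover have "odd (q2 - 2)"
      using part(2,3) by presburger
    ultimately show "oo_part n (q1 # q2 # q3 # R) \<and> \<not> ?base"
      unfolding oo_part_Cons_iff using part adm by auto
  qed
  then show ?thesis
    using oo_part_Cons_iff[of n q1 q2 q3 R] by blast
qed

lemma desc_list_non_ones:
  fixes M :: "nat multiset"
  defines "R \<equiv> desc_list {#x \<in># M. x \<noteq> 1#}"
  shows "mset R + replicate_mset (count M 1) 1 = M" "sorted_wrt (\<ge>) R" "1 \<notin> set R"
    "sum_list R + count M 1 = sum_mset M"
proof -
  show M: "mset R + replicate_mset (count M 1) 1 = M"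
    unfolding R_def by (simp add: filter_mset_neq_add_replicate)
  show "sorted_wrt (\<ge>) R"
    unfolding R_def by (rule sorted_desc_list)
  show "1 \<notin> set R"
    unfolding R_def by (metis (mono_tags, lifting) mem_Collect_eq set_mset_filter set_mset_mset mset_desc_list)
  show "sum_list R + count M 1 = sum_mset M"
    by (subst (2) M[symmetric]) (simp add: sum_mset_sum_list)
qed

definition oe_list :: "nat \<Rightarrow> nat multiset \<Rightarrow> nat list" where
  "oe_list a M = (a - 1 + count M 1) # (a - 1) # (a - 1) # desc_list {#x \<in># M. x \<noteq> 1#} @ [3]"

lemma oe_part_oe_list:
  assumes "(a, M) \<in> odd_param even n"
  shows "oe_part n (oe_list a M)"
proof -
  let ?R = "desc_list {#x \<in># M. x \<noteq> 1#}"
  have a: "4 \<le> a" "even a" and adm: "glaisher_admissible (a - 2) M" and n: "3 * a + sum_mset M = n"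
    using assms unfolding odd_param_def by auto
  note R = desc_list_non_ones[of M]
  have "\<forall>x\<in>set ?R. 3 \<le> x"
    using adm by (rule glaisher_admissible_non_ones_ge3)
  moreover have "glaisher_admissible (a - 1 - 1) (mset ?R + replicate_mset (a - 1 + count M 1 - (a - 1)) 1)"
    using adm R(1) by (simp add: numeral_2_eq_2)
  moreover have "a - 1 + count M 1 + 2 * (a - 1) + sum_list ?R + 3 = n"
    using a n R(4) by simp
  moreover have "odd (a - 1)" "3 \<le> a - 1"
    using a by presburger+
  ultimately show ?thesis
    unfolding oe_list_def oe_part_iff using R(2) by simp
qed

lemma oe_part_imp_oe_list:
  assumes "oe_part n qs"
  shows "\<exists>(a, M)\<in>odd_param even n. qs = oe_list a M"
proof -
  have "4 \<le> length qs" "last qs = 3"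
    using assms unfolding oe_part_def Let_def by auto
  then obtain q1 q2 q3 R where qs: "qs = q1 # q2 # q3 # R @ [3]"
    by (metis Cons3_snoc_cases)
  define M where "M = mset R + replicate_mset (q1 - q2) 1"
  have part: "q3 = q2" "odd q2" "3 \<le> q2" "q2 \<le> q1" "sorted_wrt (\<ge>) R" "\<forall>x\<in>set R. 3 \<le> x"
    "glaisher_admissible (q2 + 1 - 2) M" "q1 + 2 * q2 + sum_list R + 3 = n"
    using assms unfolding qs oe_part_iff M_def by auto
  have "1 \<notin> set R"
    using part(6) by fastforce
  then have "count M 1 = q1 - q2" "{#x \<in># M. x \<noteq> 1#} = mset R"
    unfolding M_def by (auto simp: count_mset_0_iff intro!: multiset_eqI)
  then have "qs = oe_list (q2 + 1) M"
    unfolding qs oe_list_def using part(1,4,5) by (simp add: desc_list_mset)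
  moreover have "(q2 + 1, M) \<in> odd_param even n"
    unfolding odd_param_def using part by (simp add: M_def sum_mset_sum_list)
  ultimately show ?thesis
    by blast
qed

lemma inj_on_oe_list: "inj_on (\<lambda>(a, M). oe_list a M) {(a, M). 1 \<le> a}"
proof (rule inj_onI, clarify)
  fix a M a' M'
  assume "1 \<le> a" "1 \<le> a'" "oe_list a M = oe_list a' M'"
  then have "a = a'" "count M 1 = count M' 1"
    "desc_list {#x \<in># M. x \<noteq> 1#} = desc_list {#x \<in># M'. x \<noteq> 1#}"
    unfolding oe_list_def by auto
  then show "a = a' \<and> M = M'"
    by (metis filter_mset_neq_add_replicate mset_desc_list)
qed

lemma card_oe_part: "card {qs. oe_part n qs} = card (odd_param even n)"
proof -
  have "{qs. oe_part n qs} = (\<lambda>(a, M). oe_list a M) ` odd_param even n"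
    using oe_part_oe_list oe_part_imp_oe_list by fast
  moreover have "inj_on (\<lambda>(a, M). oe_list a M) (odd_param even n)"
    by (rule inj_on_subset[OF inj_on_oe_list]) (auto simp: odd_param_def)
  ultimately show ?thesis
    by (simp add: card_image)
qed

(* For a = 3 the generic list would contain the part 1; by odd_param_3 this case only
   occurs as (3, {#}), giving the exceptional partition (3, 3, 3). *)
definition oo_list :: "nat \<Rightarrow> nat multiset \<Rightarrow> nat list" where
  "oo_list a M = (if a = 3 then [3, 3, 3]
     else (a + 2 + count M 1) # a # (a - 2) # desc_list {#x \<in># M. x \<noteq> 1#})"

lemma odd_param_3: "(3, M) \<in> odd_param odd n \<longleftrightarrow> M = {#} \<and> n = 9"
proof -
  have "glaisher_admissible 1 {#}"
    by (simp add: glaisher_admissible_def)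
  then show ?thesis
    unfolding odd_param_def using glaisher_admissible_1[of M] by auto
qed

lemma oo_part_oo_list:
  assumes "(a, M) \<in> odd_param odd n"
  shows "oo_part n (oo_list a M)"
proof (cases "a = 3")
  case True
  then show ?thesis
    using assms by (simp add: odd_param_3 oo_list_def oo_part_iff)
next
  case False
  let ?R = "desc_list {#x \<in># M. x \<noteq> 1#}"
  have a: "5 \<le> a" "odd a" and adm: "glaisher_admissible (a - 2) M" and n: "3 * a + sum_mset M = n"
    using assms False unfolding odd_param_def by auto presburger
  note R = desc_list_non_ones[of M]
  have "\<forall>x\<in>set ?R. 3 \<le> x"
    using adm by (rule glaisher_admissible_non_ones_ge3)
  moreover have "glaisher_admissible (a - 2) (mset ?R + replicate_mset (a + 2 + count M 1 - a - 2) 1)"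
    using adm R(1) by simp
  moreover have "a + 2 + count M 1 + 2 * a + sum_list ?R = n + 2"
    using n R(4) by simp
  moreover have "oo_list a M = (a + 2 + count M 1) # a # (a - 2) # ?R"
    using False by (simp add: oo_list_def)
  ultimately show ?thesis
    using a R(2) by (simp add: oo_part_iff)
qed

lemma oo_part_imp_oo_list:
  assumes "oo_part n qs"
  shows "\<exists>(a, M)\<in>odd_param odd n. qs = oo_list a M"
proof -
  have "3 \<le> length qs"
    using assms unfolding oo_part_def Let_def by auto
  then obtain q1 q2 q3 R where qs: "qs = q1 # q2 # q3 # R"
    by (auto simp: Suc_le_length_iff numeral_eq_Suc)
  from assms consider "qs = [3, 3, 3]" "n = 9"
    | "q3 = q2 - 2" "odd q2" "5 \<le> q2" "q2 + 2 \<le> q1" "sorted_wrt (\<ge>) R" "\<forall>x\<in>set R. 3 \<le> x"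
      "glaisher_admissible (q2 - 2) (mset R + replicate_mset (q1 - q2 - 2) 1)"
      "q1 + 2 * q2 + sum_list R = n + 2"
    unfolding qs oo_part_iff by blast
  then show ?thesis
  proof cases
    case 1
    then show ?thesis
      using odd_param_3 by (force simp: oo_list_def)
  next
    case 2
    define M where "M = mset R + replicate_mset (q1 - q2 - 2) 1"
    have "1 \<notin> set R"
      using 2(6) by fastforce
    then have "count M 1 = q1 - q2 - 2" "{#x \<in># M. x \<noteq> 1#} = mset R"
      unfolding M_def by (auto simp: count_mset_0_iff intro!: multiset_eqI)
    then have "qs = oo_list q2 M"
      unfolding qs oo_list_def using 2(1,3,4,5) by (simp add: desc_list_mset)
    moreover have "(q2, M) \<in> odd_param odd n"
      unfolding odd_param_def using 2 by (simp add: M_def sum_mset_sum_list)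
    ultimately show ?thesis
      by blast
  qed
qed

lemma inj_on_oo_list: "inj_on (\<lambda>(a, M). oo_list a M) (odd_param odd n)"
proof (rule inj_onI, clarify)
  fix a M a' M'
  assume in_param: "(a, M) \<in> odd_param odd n" "(a', M') \<in> odd_param odd n"
    and eq: "oo_list a M = oo_list a' M'"
  show "a = a' \<and> M = M'"
  proof (cases "a = 3 \<or> a' = 3")
    case True
    with eq have "a = 3" "a' = 3"
      by (auto simp: oo_list_def split: if_splits)
    then show ?thesis
      using in_param by (simp add: odd_param_3)
  next
    case False
    with eq have "a = a'" "count M 1 = count M' 1"
      "desc_list {#x \<in># M. x \<noteq> 1#} = desc_list {#x \<in># M'. x \<noteq> 1#}"
      by (auto simp: oo_list_def)
    then show ?thesis
      by (metis filter_mset_neq_add_replicate mset_desc_list)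
  qed
qed

lemma card_oo_part: "card {qs. oo_part n qs} = card (odd_param odd n)"
proof -
  have "{qs. oo_part n qs} = (\<lambda>(a, M). oo_list a M) ` odd_param odd n"
    using oo_part_oo_list oo_part_imp_oo_list by fast
  then show ?thesis
    using inj_on_oo_list by (simp add: card_image)
qed

section \<open>Counting butterfly partitions\<close>

definition strict_partitions :: "nat \<Rightarrow> nat \<Rightarrow> nat list set" where
  "strict_partitions k m = {xs. sorted_wrt (>) xs \<and> (\<forall>x\<in>set xs. k \<le> x) \<and> sum_list xs = m}"

definition consecutive_top :: "nat \<Rightarrow> nat \<Rightarrow> nat list set" where
  "consecutive_top k m = {xs \<in> strict_partitions k m. 2 \<le> length xs \<and> xs ! 0 = xs ! 1 + 1}"

lemma qd_eq_card_strict_partitions: "qd m = card (strict_partitions 1 m)"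
  unfolding qd_def strict_partitions_def by (metis less_one not_less)

lemma finite_strict_partitions: "finite (strict_partitions k m)"
proof (rule finite_subset)
  show "strict_partitions k m \<subseteq> {xs. set xs \<subseteq> {0..m} \<and> length xs \<le> Suc m}"
  proof clarify
    fix xs assume "xs \<in> strict_partitions k m"
    then have "sorted_wrt (>) xs" "sum_list xs = m"
      by (auto simp: strict_partitions_def)
    then have sub: "set xs \<subseteq> {0..m}" and "distinct xs"
      using member_le_sum_list[of _ xs] by (auto simp: sorted_greater_iff)
    then have "length xs \<le> card {0..m}"
      by (metis card_mono distinct_card finite_atLeastAtMost)
    then show "set xs \<subseteq> {0..m} \<and> length xs \<le> Suc m"
      using sub by simp
  qed
  show "finite {xs. set xs \<subseteq> {0..m} \<and> length xs \<le> Suc m}"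
    by (rule finite_lists_length_le) simp
qed

lemma card_eq_add_if_bij_betw_Diff:
  assumes "finite A" "B \<subseteq> A" "bij_betw f (A - B) C"
  shows "card A = card B + card C"
  using card_Diff_subset[OF finite_subset[OF assms(2,1)] assms(2)] card_mono[OF assms(1,2)]
    bij_betw_same_card[OF assms(3)] by simp

lemma strict_partitions_butlast:
  assumes "xs \<in> strict_partitions k m - strict_partitions (Suc k) m"
  shows "xs = butlast xs @ [k]" "butlast xs \<in> strict_partitions (Suc k) (m - k)"
proof -
  have xs: "sorted_wrt (>) xs" "\<forall>x\<in>set xs. k \<le> x" "sum_list xs = m"
    using assms by (auto simp: strict_partitions_def)
  have "\<exists>x\<in>set xs. x < Suc k"
    using assms xs by (auto simp: strict_partitions_def not_le)
  with xs(2) have "k \<in> set xs"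
    using le_antisym less_Suc_eq_le by blast
  then have "last xs = k"
    using last_le_of_sorted_greater[OF xs(1)] xs(2) last_in_set[of xs] by fastforce
  then show xs_eq: "xs = butlast xs @ [k]"
    using \<open>k \<in> set xs\<close> by (metis append_butlast_last_id empty_iff list.set(1))
  have "sorted_wrt (>) (butlast xs @ [k])" "sum_list (butlast xs @ [k]) = m"
    using xs(1,3) xs_eq by metis+
  then show "butlast xs \<in> strict_partitions (Suc k) (m - k)"
    by (auto simp: strict_partitions_def sorted_wrt_append Suc_le_eq)
qed

lemma strict_partitions_append:
  assumes "k \<le> m" "q \<in> strict_partitions (Suc k) (m - k)"
  shows "q @ [k] \<in> strict_partitions k m - strict_partitions (Suc k) m"
proof -
  have q: "sorted_wrt (>) q" "\<forall>x\<in>set q. Suc k \<le> x" "sum_list q = m - k"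
    using assms(2) by (auto simp: strict_partitions_def)
  have "sorted_wrt (>) (q @ [k])"
    using q(1,2) by (auto simp: sorted_wrt_append Suc_le_eq)
  moreover have "\<forall>x\<in>set (q @ [k]). k \<le> x"
    using q(2) by auto
  moreover have "sum_list (q @ [k]) = m"
    using q(3) assms(1) by simp
  ultimately show ?thesis
    unfolding strict_partitions_def by auto
qed

lemma card_strict_partitions_least:
  assumes "k \<le> m"
  shows "card (strict_partitions k m) =
    card (strict_partitions (Suc k) m) + card (strict_partitions (Suc k) (m - k))"
proof (rule card_eq_add_if_bij_betw_Diff[OF finite_strict_partitions])
  show "strict_partitions (Suc k) m \<subseteq> strict_partitions k m"
    by (auto simp: strict_partitions_def)
  show "bij_betw butlast (strict_partitions k m - strict_partitions (Suc k) m)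
      (strict_partitions (Suc k) (m - k))"
  proof (rule bij_betw_byWitness[where f' = "\<lambda>q. q @ [k]"])
    show "\<forall>xs\<in>strict_partitions k m - strict_partitions (Suc k) m. butlast xs @ [k] = xs"
      using strict_partitions_butlast(1) by metis
    show "\<forall>q\<in>strict_partitions (Suc k) (m - k). butlast (q @ [k]) = q"
      by simp
    show "butlast ` (strict_partitions k m - strict_partitions (Suc k) m) \<subseteq>
        strict_partitions (Suc k) (m - k)"
      using strict_partitions_butlast(2) by blast
    show "(\<lambda>q. q @ [k]) ` strict_partitions (Suc k) (m - k) \<subseteq>
        strict_partitions k m - strict_partitions (Suc k) m"
      using strict_partitions_append[OF assms] by blast
  qed
qed

lemma strict_partitions_lower_top:
  assumes "k < m" "x # t \<in> strict_partitions k m - consecutive_top k m"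
  shows "(x - 1) # t \<in> strict_partitions k (m - 1)"
proof -
  have p: "sorted_wrt (>) (x # t)" "\<forall>z\<in>set (x # t). k \<le> z" "x + sum_list t = m"
    "t \<noteq> [] \<longrightarrow> x \<noteq> hd t + 1"
    using assms(2) by (auto simp: consecutive_top_def strict_partitions_def neq_Nil_conv)
  have "k < x \<and> (\<forall>z\<in>set t. z < x - 1)"
  proof (cases t)
    case Nil
    then show ?thesis
      using p(3) assms(1) by simp
  next
    case (Cons t0 t')
    then show ?thesis
      using p by fastforce
  qed
  then show ?thesis
    using p by (auto simp: strict_partitions_def)
qed

lemma strict_partitions_raise_top:
  assumes "0 < m" "y # t \<in> strict_partitions k (m - 1)"
  shows "(y + 1) # t \<in> strict_partitions k m - consecutive_top k m"
  using assms by (cases t) (auto simp: consecutive_top_def strict_partitions_def)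

lemma card_strict_partitions_top:
  assumes "1 \<le> k" "k < m"
  shows "card (strict_partitions k m) = card (consecutive_top k m) + card (strict_partitions k (m - 1))"
proof (rule card_eq_add_if_bij_betw_Diff[OF finite_strict_partitions])
  show "consecutive_top k m \<subseteq> strict_partitions k m"
    by (auto simp: consecutive_top_def)
  have nonempty: "xs \<noteq> []" if "xs \<in> strict_partitions k m'" "0 < m'" for xs m'
    using that by (auto simp: strict_partitions_def)
  note lower = strict_partitions_lower_top[OF assms(2)]
  note raise = strict_partitions_raise_top[where m = m]
  let ?f = "\<lambda>p. (hd p - 1) # tl p"
  let ?g = "\<lambda>q. (hd q + 1) # tl q"
  show "bij_betw ?f (strict_partitions k m - consecutive_top k m) (strict_partitions k (m - 1))"
  proof (rule bij_betw_byWitness[where f' = ?g])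
    show "\<forall>p\<in>strict_partitions k m - consecutive_top k m. ?g (?f p) = p"
      using lower nonempty assms by (fastforce simp: neq_Nil_conv strict_partitions_def)
    show "\<forall>q\<in>strict_partitions k (m - 1). ?f (?g q) = q"
      using nonempty assms by (fastforce simp: neq_Nil_conv)
    show "?f ` (strict_partitions k m - consecutive_top k m) \<subseteq> strict_partitions k (m - 1)"
      using lower nonempty assms by (fastforce simp: neq_Nil_conv)
    show "?g ` strict_partitions k (m - 1) \<subseteq> strict_partitions k m - consecutive_top k m"
      using raise nonempty assms by (fastforce simp: neq_Nil_conv)
  qed
qed

lemma butterfly_iff_consecutive_top:
  "butterfly n p \<longleftrightarrow> p \<in> consecutive_top 2 n \<and> 3 \<le> length p \<and> p ! 1 = p ! 2 + 1"
proof
  assume "butterfly n p"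
  moreover from this have "\<forall>x\<in>set p. 2 \<le> x"
    using last_le_of_sorted_greater[of p] unfolding butterfly_def by (meson order_trans)
  ultimately show "p \<in> consecutive_top 2 n \<and> 3 \<le> length p \<and> p ! 1 = p ! 2 + 1"
    by (auto simp: butterfly_def consecutive_top_def strict_partitions_def)
next
  assume "p \<in> consecutive_top 2 n \<and> 3 \<le> length p \<and> p ! 1 = p ! 2 + 1"
  moreover from this have "last p \<in> set p"
    by (metis last_in_set list.size(3) not_numeral_le_zero)
  ultimately show "butterfly n p"
    by (auto simp: butterfly_def consecutive_top_def strict_partitions_def)
qed

lemma consecutive_top_lower:
  assumes "6 \<le> n" "(y + 1) # y # t \<in> consecutive_top 2 n - {p. butterfly n p}"
  shows "y # (y - 1) # t \<in> consecutive_top 2 (n - 2)"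
proof -
  have p: "sorted_wrt (>) ((y + 1) # y # t)" "\<forall>z\<in>set ((y + 1) # y # t). 2 \<le> z"
    "2 * y + 1 + sum_list t = n" "t \<noteq> [] \<longrightarrow> y \<noteq> hd t + 1"
    using assms(2) by (auto simp: butterfly_iff_consecutive_top consecutive_top_def strict_partitions_def
        neq_Nil_conv)
  have "3 \<le> y \<and> (\<forall>z\<in>set t. z < y - 1)"
  proof (cases t)
    case Nil
    then show ?thesis
      using p(3) assms(1) by simp
  next
    case (Cons t0 t')
    then show ?thesis
      using p by fastforce
  qed
  then show ?thesis
    using p by (auto simp: consecutive_top_def strict_partitions_def)
qed

lemma consecutive_top_raise:
  assumes "2 \<le> n" "(z + 1) # z # t \<in> consecutive_top 2 (n - 2)"
  shows "(z + 2) # (z + 1) # t \<in> consecutive_top 2 n - {p. butterfly n p}"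
  using assms
  by (cases t) (auto simp: butterfly_iff_consecutive_top consecutive_top_def strict_partitions_def)

lemma card_consecutive_top:
  assumes "6 \<le> n"
  shows "card (consecutive_top 2 n) = card {p. butterfly n p} + card (consecutive_top 2 (n - 2))"
proof (rule card_eq_add_if_bij_betw_Diff)
  show "finite (consecutive_top 2 n)"
    using finite_strict_partitions[of 2 n] by (simp add: consecutive_top_def)
  show "{p. butterfly n p} \<subseteq> consecutive_top 2 n"
    by (auto simp: butterfly_iff_consecutive_top)
  have shape: "\<exists>y t. p = (y + 1) # y # t" if "p \<in> consecutive_top 2 m" for p m
    using that by (auto simp: consecutive_top_def Suc_le_length_iff numeral_eq_Suc)
  note lower = consecutive_top_lower[OF assms]
  have raise: "(z + 2) # (z + 1) # t \<in> consecutive_top 2 n - {p. butterfly n p}"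
    if "(z + 1) # z # t \<in> consecutive_top 2 (n - 2)" for z t
    using assms that by (intro consecutive_top_raise) simp_all
  let ?f = "\<lambda>p. (p ! 0 - 1) # (p ! 1 - 1) # drop 2 p"
  let ?g = "\<lambda>q. (q ! 0 + 1) # (q ! 1 + 1) # drop 2 q"
  show "bij_betw ?f (consecutive_top 2 n - {p. butterfly n p}) (consecutive_top 2 (n - 2))"
  proof (rule bij_betw_byWitness[where f' = ?g])
    show "\<forall>p\<in>consecutive_top 2 n - {p. butterfly n p}. ?g (?f p) = p"
      using shape lower by (fastforce simp: consecutive_top_def strict_partitions_def)
    show "\<forall>q\<in>consecutive_top 2 (n - 2). ?f (?g q) = q"
      using shape by fastforce
    show "?f ` (consecutive_top 2 n - {p. butterfly n p}) \<subseteq> consecutive_top 2 (n - 2)"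
      using shape lower by fastforce
    show "?g ` consecutive_top 2 (n - 2) \<subseteq> consecutive_top 2 n - {p. butterfly n p}"
      using shape raise by fastforce
  qed
qed

lemma card_butterfly_eq_s:
  assumes "6 \<le> n"
  shows "int (card {p. butterfly n p}) = s n"
proof -
  define d where "d m = int (card (strict_partitions 2 m))" for m
  have q: "int (qd m) = d m + d (m - 1)" if "1 \<le> m" for m
    using card_strict_partitions_least[OF that]
    by (simp add: qd_eq_card_strict_partitions d_def numeral_2_eq_2)
  have w: "int (card (consecutive_top 2 m)) = d m - d (m - 1)" if "3 \<le> m" for m
    using card_strict_partitions_top[of 2 m] that by (simp add: d_def)
  have "int (card {p. butterfly n p}) = (d n - d (n - 1)) - (d (n - 2) - d (n - 2 - 1))"
    using card_consecutive_top[OF assms] w[of n] w[of "n - 2"] assms by simp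
  also have "\<dots> = s n"
    using q[of n] q[of "n - 1"] q[of "n - 2"] assms by (simp add: s_def numeral_eq_Suc)
  finally show ?thesis .
qed

lemma s_e_add_s_o: "s_e n + s_o n = card {p. butterfly n p}"
proof -
  have "finite {p. butterfly n p}"
    using finite_strict_partitions[of 2 n]
    by (rule finite_subset[rotated]) (auto simp: butterfly_iff_consecutive_top consecutive_top_def)
  then show ?thesis
    unfolding s_e_def s_o_def by (subst card_Un_disjoint[symmetric]) (auto intro: arg_cong[where f = card])
qed

theorem proposition3p4:
  fixes n :: nat
  assumes "n \<ge> 6"
  shows "o_e n = s_e n \<and> o_o n = s_o n \<and> int (o_e n) + int (o_o n) = s n"
proof -
  have e: "o_e n = s_e n"
    using card_oe_part[of n] card_butterfly_param_odd_param[of even n] card_butterfly_param[of n even]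
    unfolding o_e_def s_e_def by simp
  have o: "o_o n = s_o n"
    using card_oo_part[of n] card_butterfly_param_odd_param[of odd n] card_butterfly_param[of n odd]
    unfolding o_o_def s_o_def by simp
  have "int (o_e n) + int (o_o n) = s n"
    using card_butterfly_eq_s[OF assms] s_e_add_s_o[of n] e o by simp
  with e o show ?thesis
    by blast
qed

end
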